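(* Let $P$ be a locally finite poset, $R$ a commutative unital ring, and $n\ge 3$. Let $\mathbf{x}=(x_1,\mathbf{u})$ and $\mathbf{y}=(\mathbf{v},y_n)$ be elements of $P^n_\le$, where $x_1,y_n\in P$ and $\mathbf{u},\mathbf{v}\in P^{n-1}_\le$. Then in $I^n(P,R)$, $$e_{\mathbf{x}}e_{\mathbf{y}}=\begin{cases}\sum_{\mathbf{z}\in\mathcal{I}(\mathbf{u})} e_{(x_1,\mathbf{z},y_n)}, & \mathbf{u}=\mathbf{v},\\ 0,& \mathbf{u}\ne\mathbf{v}.\end{cases}$$
   Context: For a poset $P$ and $n\ge 2$, $P^n_\le=\{(x_1,\dots,x_n)\in P^n: x_1\le\dots\le x_n\}$. For $\mathbf{x}=(x_1,\dots,x_n)\in P^n_\le$, $\mathcal{I}(\mathbf{x})=[x_1,x_2]\times\dots\times[x_{n-1},x_n]\subseteq P^{n-1}_\le$, where $[a,b]=\{c\in P: a\le c\le b\}$. The $n$-th partial flag incidence algebra $I^n(P,R)$ is the $R$-module of functions $f:P^n_\le\to R$ with multiplication $(fg)(\mathbf{x})=\sum_{\mathbf{y}\in\mathcal{I}(\mathbf{x})}f(x_1,\mathbf{y})g(\mathbf{y},x_n)$. For $\mathbf{x}\in P^n_\le$, $e_{\mathbf{x}}\in I^n(P,R)$ is the function equal to $1$ at $\mathbf{x}$ and $0$ elsewhere. *)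

theory Defs
  imports Main
begin

text \<open>Tuples in \<open>P^n\<close> are represented as lists of length n over a type \<open>'a :: order\<close>
  (the poset P). Functions \<open>P^n_\<le> \<rightarrow> R\<close> are represented as functions on lists
  that are zero off \<open>P^n_\<le>\<close>.\<close>

definition chains :: "nat \<Rightarrow> ('a::order) list set" where
  "chains n = {xs. length xs = n \<and> (\<forall>i. Suc i < length xs \<longrightarrow> xs ! i \<le> xs ! Suc i)}"

definition intv_prod :: "('a::order) list \<Rightarrow> 'a list set" where
  "intv_prod xs = {ys. length ys = length xs - 1 \<and>
      (\<forall>i < length ys. xs ! i \<le> ys ! i \<and> ys ! i \<le> xs ! Suc i)}"

definition locally_finite_order :: "('a::order) itself \<Rightarrow> bool" where
  "locally_finite_order _ \<longleftrightarrow> (\<forall>a b::'a. finite {a..b})"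

definition pfi_mult :: "nat \<Rightarrow> (('a::order) list \<Rightarrow> 'r::comm_ring_1) \<Rightarrow> ('a list \<Rightarrow> 'r)
    \<Rightarrow> ('a list \<Rightarrow> 'r)" where
  "pfi_mult n f g = (\<lambda>x. if x \<in> chains n
      then (\<Sum>y\<in>intv_prod x. f (hd x # y) * g (y @ [last x])) else 0)"

definition pfi_e :: "('a::order) list \<Rightarrow> ('a list \<Rightarrow> 'r::comm_ring_1)" where
  "pfi_e x = (\<lambda>w. if w = x then 1 else 0)"

end

theory Submission
  imports Defs
begin

text \<open>At a flag \<open>w\<close>, the sum defining \<open>e\<^sub>x e\<^sub>y\<close> has at most one nonzero term, the one indexed
  by \<open>u\<close>; it survives iff \<open>u = v\<close>, \<open>w\<close> runs from \<open>x\<^sub>1\<close> to \<open>y\<^sub>n\<close>, and \<open>u \<in> \<I>(w)\<close>. A list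
  interlaced by \<open>u\<close> in this way is automatically a chain, and dropping its endpoints yields
  exactly an element of \<open>\<I>(u)\<close>; so the surviving \<open>w\<close> are the flags \<open>(x\<^sub>1, z, y\<^sub>n)\<close> with
  \<open>z \<in> \<I>(u)\<close>.\<close>

lemma chains_eq_sorted_wrt: "chains n = {xs. length xs = n \<and> sorted_wrt (\<le>) xs}"
  by (auto simp: chains_def sorted_wrt_iff_nth_Suc_transp)

lemma finite_intv_prod:
  assumes "locally_finite_order TYPE('a::order)"
  shows "finite (intv_prod (xs :: 'a list))"
proof -
  let ?S = "\<Union>i<length xs. {xs ! i..xs ! Suc i}"
  have "intv_prod xs \<subseteq> {ys. set ys \<subseteq> ?S \<and> length ys = length xs - 1}"
    by (fastforce simp: intv_prod_def in_set_conv_nth)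
  moreover have "finite ?S"
    using assms by (auto simp: locally_finite_order_def)
  ultimately show ?thesis
    using finite_subset finite_lists_length_eq by blast
qed

lemma sorted_wrt_if_mem_intv_prod:
  assumes "ys \<in> intv_prod xs"
  shows "sorted_wrt (\<le>) xs"
proof -
  have "xs ! i \<le> xs ! Suc i" if "Suc i < length xs" for i
  proof -
    have "xs ! i \<le> ys ! i" "ys ! i \<le> xs ! Suc i"
      using assms that by (auto simp: intv_prod_def)
    then show ?thesis
      by (rule order_trans)
  qed
  then show ?thesis
    by (simp add: sorted_wrt_iff_nth_Suc_transp)
qed

lemma mem_intv_prod_Cons_snoc_iff:
  assumes len: "length u = Suc (length z)"
  shows "u \<in> intv_prod (a # z @ [b]) \<longleftrightarrow> a \<le> hd u \<and> last u \<le> b \<and> z \<in> intv_prod u"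
proof -
  let ?w = "a # z @ [b]"
  have "u \<noteq> []" using len by auto
  have lower: "(\<forall>i<length u. ?w ! i \<le> u ! i) \<longleftrightarrow> a \<le> hd u \<and> (\<forall>j<length z. z ! j \<le> u ! Suc j)"
    unfolding len All_less_Suc2 using \<open>u \<noteq> []\<close> by (simp add: nth_append hd_conv_nth)
  have upper: "(\<forall>i<length u. u ! i \<le> ?w ! Suc i) \<longleftrightarrow> (\<forall>j<length z. u ! j \<le> z ! j) \<and> last u \<le> b"
    unfolding len All_less_Suc using len \<open>u \<noteq> []\<close> by (auto simp: nth_append last_conv_nth)
  show ?thesis
    using len lower upper unfolding intv_prod_def by auto
qed

lemma interlaced_chains_eq:
  assumes "n \<ge> 2" "a # u \<in> chains n" "u @ [b] \<in> chains n"
  shows "{w \<in> chains n. hd w = a \<and> last w = b \<and> u \<in> intv_prod w} = (\<lambda>z. a # z @ [b]) ` intv_prod u"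
proof -
  have len_u: "length u = n - 1" and "u \<noteq> []"
    using assms by (auto simp: chains_def)
  have ends: "a \<le> hd u" "last u \<le> b"
    using assms(2,3) \<open>u \<noteq> []\<close> by (auto simp: chains_eq_sorted_wrt sorted_wrt_append)
  show ?thesis
  proof (intro set_eqI iffI)
    fix w assume "w \<in> {w \<in> chains n. hd w = a \<and> last w = b \<and> u \<in> intv_prod w}"
    then have w: "w \<in> chains n" "hd w = a" "last w = b" "u \<in> intv_prod w"
      by auto
    have "length w = n"
      using w(1) by (simp add: chains_def)
    then have "w \<noteq> []" "tl w \<noteq> []"
      using assms(1) by (auto simp flip: length_greater_0_conv)
    then have w_eq: "w = a # butlast (tl w) @ [b]"
      using w(2,3) by (metis append_butlast_last_id hd_Cons_tl last_tl)
    have "length u = Suc (length (butlast (tl w)))"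
      using \<open>length w = n\<close> len_u assms(1) by simp
    then have "butlast (tl w) \<in> intv_prod u"
      using w(4) w_eq mem_intv_prod_Cons_snoc_iff by metis
    with w_eq show "w \<in> (\<lambda>z. a # z @ [b]) ` intv_prod u"
      by blast
  next
    fix w assume "w \<in> (\<lambda>z. a # z @ [b]) ` intv_prod u"
    then obtain z where z: "z \<in> intv_prod u" and w_eq: "w = a # z @ [b]"
      by blast
    have "length u = Suc (length z)"
      using z len_u assms(1) by (simp add: intv_prod_def)
    then have "u \<in> intv_prod w"
      using z ends w_eq mem_intv_prod_Cons_snoc_iff by metis
    moreover have "length w = n"
      using \<open>length u = Suc (length z)\<close> len_u assms(1) w_eq by simp
    ultimately have "w \<in> chains n"
      by (simp add: chains_eq_sorted_wrt sorted_wrt_if_mem_intv_prod)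
    with \<open>u \<in> intv_prod w\<close> w_eq
    show "w \<in> {w \<in> chains n. hd w = a \<and> last w = b \<and> u \<in> intv_prod w}"
      by simp
  qed
qed

lemma sum_pfi_e_image:
  assumes "finite A" "inj_on f A"
  shows "(\<Sum>z\<in>A. pfi_e (f z) w :: 'r::comm_ring_1) = (if w \<in> f ` A then 1 else 0)"
proof -
  have "(\<Sum>z\<in>A. pfi_e (f z) w :: 'r) = (\<Sum>y\<in>f ` A. pfi_e y w)"
    using assms(2) by (simp add: sum.reindex)
  also have "\<dots> = (if w \<in> f ` A then 1 else 0)"
    using assms(1) by (simp add: pfi_e_def)
  finally show ?thesis .
qed

lemma pfi_mult_pfi_e_apply:
  assumes "finite (intv_prod w)"
  shows "pfi_mult n (pfi_e (a # u)) (pfi_e (v @ [b])) w =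
    (if u = v \<and> w \<in> {w \<in> chains n. hd w = a \<and> last w = b \<and> u \<in> intv_prod w} then 1 else 0
      :: 'r::comm_ring_1)"
proof -
  have "(pfi_e (a # u) (hd w # y) :: 'r) * pfi_e (v @ [b]) (y @ [last w]) =
      (if u = y then if hd w = a \<and> last w = b \<and> u = v then 1 else 0 else 0)" for y
    by (auto simp: pfi_e_def)
  then show ?thesis
    using assms by (auto simp: pfi_mult_def)
qed

theorem proposition1p2:
  fixes x1 yn :: "'a::order" and u v :: "'a list" and n :: nat
  assumes "locally_finite_order TYPE('a)"
    and "n \<ge> 3"
    and "x1 # u \<in> chains n"
    and "v @ [yn] \<in> chains n"
  shows "pfi_mult n (pfi_e (x1 # u) :: 'a list \<Rightarrow> 'r::comm_ring_1) (pfi_e (v @ [yn])) =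
    (if u = v then (\<lambda>w. \<Sum>z\<in>intv_prod u. pfi_e (x1 # z @ [yn]) w) else (\<lambda>w. 0))"
proof (cases "u = v")
  case True
  have interlaced:
    "{w \<in> chains n. hd w = x1 \<and> last w = yn \<and> u \<in> intv_prod w} = (\<lambda>z. x1 # z @ [yn]) ` intv_prod u"
    using assms(2-4) True by (intro interlaced_chains_eq) auto
  have "pfi_mult n (pfi_e (x1 # u) :: 'a list \<Rightarrow> 'r) (pfi_e (v @ [yn])) w =
      (\<Sum>z\<in>intv_prod u. pfi_e (x1 # z @ [yn]) w)" for w
  proof -
    have "pfi_mult n (pfi_e (x1 # u) :: 'a list \<Rightarrow> 'r) (pfi_e (v @ [yn])) w =
        (if w \<in> (\<lambda>z. x1 # z @ [yn]) ` intv_prod u then 1 else 0)"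
      unfolding pfi_mult_pfi_e_apply[OF finite_intv_prod[OF assms(1)]] interlaced
      using True by simp
    also have "\<dots> = (\<Sum>z\<in>intv_prod u. pfi_e (x1 # z @ [yn]) w)"
      using finite_intv_prod[OF assms(1)] by (simp add: sum_pfi_e_image inj_on_def)
    finally show ?thesis .
  qed
  with True show ?thesis
    by auto
next
  case False
  then show ?thesis
    using finite_intv_prod[OF assms(1)] by (auto simp: pfi_mult_pfi_e_apply)
qed

end
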